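(* Let $G$ be a finitely generated group, $S$ a finite symmetric generating set, $\Gamma=\mathrm{Cay}(G,S)$, and $p\in(1,\infty)$. Let $f\in D^p(\Gamma)$. Suppose there exists a sequence $(\xi_n)$ of finitely supported functions $G\to\mathbb{K}$ such that: (1) $\sum_{\gamma\in G}\xi_n(\gamma)=1$ for all $n$; (2) for every $s\in S$, the functions $(\delta_s-\delta_e)*\xi_n*f$ converge point-wise to $0$ as $n\to\infty$; (3) there is $K>0$ such that for all $s\in S$ and all $n$, $\|(\delta_s-\delta_e)*\xi_n*f\|_{\ell^p(G)}<K$. Then the class $[f]$ of $f$ in $\overline{\ell^p H}^1(\Gamma)$ is $0$.
   Context: The Cayley graph $\Gamma=\mathrm{Cay}(G,S)$ has vertex set $G$ and edges $(\gamma,\gamma')$ with $s^{-1}\gamma=\gamma'$ for some $s\in S$. Functions take values in $\mathbb{K}=\mathbb{R}$ or $\mathbb{C}$. The gradient is $\nabla g(\gamma,\gamma')=g(\gamma')-g(\gamma)$; $D^p(\Gamma)=\{f:G\to\mathbb{K}:\nabla f\in\ell^p(E)\}$ with norm $\|f\|^p_{D^p}=\|\nabla f\|^p_{\ell^p(E)}+|f(e)|^p$, and $\overline{\ell^p H}^1(\Gamma)=D^p(\Gamma)/\overline{\ell^p(G)+\mathbb{K}}^{D^p}$ ($\mathbb{K}$ = constant functions). $\delta_\gamma$ is the Dirac mass at $\gamma$, and convolution is $(\xi*f)(\eta)=\sum_{\gamma\in G}\xi(\gamma)f(\gamma^{-1}\eta)$. *)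

theory Defs
  imports "HOL-Analysis.Analysis"
begin

text \<open>The group G is a type of class group_add (written additively, not necessarily
 commutative): identity 0, inverse uminus, product +. Scalars: a real normed field
 that is complete (this covers real and complex).\<close>

inductive_set generated_by :: "'g::group_add set \<Rightarrow> 'g set" for S where
  gen_zero: "0 \<in> generated_by S"
| gen_step: "s \<in> S \<Longrightarrow> x \<in> generated_by S \<Longrightarrow> s + x \<in> generated_by S"

definition finite_symmetric_generating :: "'g::group_add set \<Rightarrow> bool" where
  "finite_symmetric_generating S \<longleftrightarrow>
     finite S \<and> uminus ` S = S \<and> generated_by S = UNIV"

definition cayley_edges :: "'g::group_add set \<Rightarrow> ('g \<times> 'g) set" where
  "cayley_edges S = {(x, y). \<exists>s\<in>S. - s + x = y}"

definition grad :: "('g \<Rightarrow> 'k::ab_group_add) \<Rightarrow> 'g \<times> 'g \<Rightarrow> 'k" where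
  "grad g e = g (snd e) - g (fst e)"

definition in_lp :: "real \<Rightarrow> ('a \<Rightarrow> 'k::real_normed_vector) \<Rightarrow> 'a set \<Rightarrow> bool" where
  "in_lp p g A \<longleftrightarrow> (\<lambda>x. norm (g x) powr p) summable_on A"

definition lp_norm :: "real \<Rightarrow> ('a \<Rightarrow> 'k::real_normed_vector) \<Rightarrow> 'a set \<Rightarrow> real" where
  "lp_norm p g A = (\<Sum>\<^sub>\<infinity>x\<in>A. norm (g x) powr p) powr (1 / p)"

definition in_Dp :: "'g::group_add set \<Rightarrow> real \<Rightarrow> ('g \<Rightarrow> 'k::real_normed_vector) \<Rightarrow> bool" where
  "in_Dp S p f \<longleftrightarrow> in_lp p (grad f) (cayley_edges S)"

definition Dp_norm :: "'g::group_add set \<Rightarrow> real \<Rightarrow> ('g \<Rightarrow> 'k::real_normed_vector) \<Rightarrow> real" where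
  "Dp_norm S p f =
     ((\<Sum>\<^sub>\<infinity>e\<in>cayley_edges S. norm (grad f e) powr p) + norm (f 0) powr p) powr (1 / p)"

text \<open>The class of f in the reduced l^p cohomology is zero iff f lies in the D^p-closure
 of l^p(G) + constants.\<close>
definition reduced_lpH1_class_zero ::
  "'g::group_add set \<Rightarrow> real \<Rightarrow> ('g \<Rightarrow> 'k::real_normed_vector) \<Rightarrow> bool" where
  "reduced_lpH1_class_zero S p f \<longleftrightarrow>
     (\<forall>\<epsilon>>0. \<exists>g c. in_lp p g UNIV \<and> Dp_norm S p (\<lambda>x. f x - g x - c) < \<epsilon>)"

definition dirac :: "'g \<Rightarrow> 'g \<Rightarrow> 'k::zero_neq_one" where
  "dirac a = (\<lambda>x. if x = a then 1 else 0)"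

definition conv :: "('g::group_add \<Rightarrow> 'k::real_normed_field) \<Rightarrow> ('g \<Rightarrow> 'k) \<Rightarrow> 'g \<Rightarrow> 'k" where
  "conv \<xi> f \<eta> = (\<Sum>\<^sub>\<infinity>\<gamma>. \<xi> \<gamma> * f (- \<gamma> + \<eta>))"

end

theory Submission imports Defs begin

text \<open>Put \<open>g\<^sub>n = \<xi>\<^sub>n * f\<close>. As \<open>\<xi>\<^sub>n\<close> is finitely supported with total mass 1,
  \<open>f - g\<^sub>n\<close> is a finite combination of the differences \<open>f - f(\<gamma>\<^sup>-\<^sup>1 \<cdot>)\<close>, which lie in
  \<open>\<ell>\<^sup>p\<close> because \<open>\<nabla>f \<in> \<ell>\<^sup>p\<close> and \<open>S\<close> generates \<open>G\<close>. The gradients \<open>\<nabla>g\<^sub>n\<close> are bounded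
  in \<open>\<ell>\<^sup>p\<close> and tend to 0 pointwise. For such a sequence one picks terms one at a time so that
  each new term is small on the finitely many points carrying all but a unit of the mass of the
  partial sum; then the \<open>p\<close>-th power of the norm of a sum of \<open>N\<close> terms grows only linearly
  in \<open>N\<close>, and the mean of these terms has norm \<open>O(N\<^sup>1\<^sup>/\<^sup>p\<^sup>-\<^sup>1) \<rightarrow> 0\<close>. The corresponding mean
  of the \<open>g\<^sub>n\<close> differs from \<open>f\<close> by an element of \<open>\<ell>\<^sup>p\<close> and has arbitrarily small gradient.\<close>

definition lp_sum :: "real \<Rightarrow> ('a \<Rightarrow> 'k::real_normed_vector) \<Rightarrow> 'a set \<Rightarrow> real" where
  "lp_sum p g A = (\<Sum>\<^sub>\<infinity>x\<in>A. norm (g x) powr p)"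

lemma lp_sum_nonneg: "0 \<le> lp_sum p g A"
  unfolding lp_sum_def by (rule infsum_nonneg) simp

lemma lp_sum_less_powr_of_lp_norm_less:
  assumes "0 < p" "lp_norm p g A < K"
  shows "lp_sum p g A < K powr p"
proof -
  have "(lp_sum p g A powr (1 / p)) powr p < K powr p"
    using assms lp_sum_nonneg[of p g A] unfolding lp_norm_def lp_sum_def
    by (intro powr_less_mono2) auto
  then show ?thesis
    using assms(1) lp_sum_nonneg[of p g A] by (simp add: powr_powr)
qed

lemma norm_add_powr_le:
  fixes x y :: "'a::real_normed_vector"
  assumes "0 < p"
  shows "norm (x + y) powr p \<le> 2 powr p * (norm x powr p + norm y powr p)"
proof -
  have "norm (x + y) powr p \<le> (2 * max (norm x) (norm y)) powr p"
    using assms norm_triangle_ineq[of x y] by (intro powr_mono2) auto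
  also have "\<dots> = 2 powr p * max (norm x) (norm y) powr p"
    by (simp add: powr_mult)
  also have "\<dots> \<le> 2 powr p * (norm x powr p + norm y powr p)"
    by (intro mult_left_mono) (auto simp: max_def)
  finally show ?thesis .
qed

lemma in_lp_add:
  fixes a b :: "'a \<Rightarrow> 'k::real_normed_vector"
  assumes "0 < p" "in_lp p a A" "in_lp p b A"
  shows "in_lp p (\<lambda>x. a x + b x) A"
  unfolding in_lp_def
proof (rule summable_on_comparison_test)
  show "(\<lambda>x. 2 powr p * (norm (a x) powr p + norm (b x) powr p)) summable_on A"
    using assms unfolding in_lp_def by (intro summable_on_cmult_right summable_on_add)
qed (use norm_add_powr_le[OF assms(1)] in auto)

lemma lp_sum_add_le:
  fixes a b :: "'a \<Rightarrow> 'k::real_normed_vector"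
  assumes "0 < p" "in_lp p a A" "in_lp p b A"
  shows "lp_sum p (\<lambda>x. a x + b x) A \<le> 2 powr p * (lp_sum p a A + lp_sum p b A)"
proof -
  have "lp_sum p (\<lambda>x. a x + b x) A
      \<le> (\<Sum>\<^sub>\<infinity>x\<in>A. 2 powr p * (norm (a x) powr p + norm (b x) powr p))"
    unfolding lp_sum_def using assms in_lp_add[OF assms] unfolding in_lp_def
    by (intro infsum_mono summable_on_cmult_right summable_on_add norm_add_powr_le)
  also have "\<dots> = 2 powr p * (lp_sum p a A + lp_sum p b A)"
    using assms unfolding lp_sum_def in_lp_def
    by (simp add: infsum_cmult_right infsum_add summable_on_add)
  finally show ?thesis .
qed

lemma lp_sum_scaleR: "lp_sum p (\<lambda>x. c *\<^sub>R a x) A = \<bar>c\<bar> powr p * lp_sum p a A"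
  unfolding lp_sum_def by (simp add: powr_mult infsum_cmult_right')

lemma in_lp_scaleR: "in_lp p a A \<Longrightarrow> in_lp p (\<lambda>x. c *\<^sub>R a x) A"
  unfolding in_lp_def by (simp add: powr_mult summable_on_cmult_right)

lemma in_lp_mult_left:
  fixes a :: "'a \<Rightarrow> 'k::real_normed_field"
  shows "in_lp p a A \<Longrightarrow> in_lp p (\<lambda>x. c * a x) A"
  unfolding in_lp_def by (simp add: norm_mult powr_mult summable_on_cmult_right)

lemma in_lp_sum:
  fixes a :: "'i \<Rightarrow> 'a \<Rightarrow> 'k::real_normed_vector"
  assumes "0 < p" "finite I" "\<And>i. i \<in> I \<Longrightarrow> in_lp p (a i) A"
  shows "in_lp p (\<lambda>x. \<Sum>i\<in>I. a i x) A"
  using assms(2,3)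
proof (induction I rule: finite_induct)
  case empty
  then show ?case by (simp add: in_lp_def)
next
  case (insert i I)
  then show ?case by (simp add: in_lp_add[OF assms(1)])
qed

lemma in_lp_subset: "in_lp p a A \<Longrightarrow> B \<subseteq> A \<Longrightarrow> in_lp p a B"
  unfolding in_lp_def by (rule summable_on_subset)

lemma lp_sum_mono_set: "in_lp p a A \<Longrightarrow> B \<subseteq> A \<Longrightarrow> lp_sum p a B \<le> lp_sum p a A"
  unfolding lp_sum_def by (rule infsum_mono2) (auto simp: in_lp_def intro: summable_on_subset)

lemma lp_sum_split_finite:
  assumes "in_lp p a A" "finite F" "F \<subseteq> A"
  shows "lp_sum p a A = (\<Sum>x\<in>F. norm (a x) powr p) + lp_sum p a (A - F)"
  using infsum_Diff[of "\<lambda>x. norm (a x) powr p" A F] assms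
  unfolding lp_sum_def in_lp_def by simp

lemma in_lp_tail_small:
  assumes "in_lp p a A" "0 < \<epsilon>"
  obtains F where "finite F" "F \<subseteq> A" "lp_sum p a (A - F) \<le> \<epsilon>"
proof -
  obtain F where F: "finite F" "F \<subseteq> A"
    and "dist (\<Sum>x\<in>F. norm (a x) powr p) (lp_sum p a A) \<le> \<epsilon>"
    using infsum_finite_approximation[of "\<lambda>x. norm (a x) powr p" A \<epsilon>] assms
    unfolding in_lp_def lp_sum_def by auto
  then have "lp_sum p a (A - F) \<le> \<epsilon>"
    using lp_sum_split_finite[OF assms(1) F] by (simp add: dist_real_def)
  with F that show thesis by blast
qed

lemma lp_sum_Times_finite:
  assumes "finite S" "\<And>s. s \<in> S \<Longrightarrow> in_lp p (\<lambda>y. a (s, y)) B"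
  shows "in_lp p a (S \<times> B)" "lp_sum p a (S \<times> B) = (\<Sum>s\<in>S. lp_sum p (\<lambda>y. a (s, y)) B)"
proof -
  show *: "in_lp p a (S \<times> B)"
    unfolding in_lp_def
    by (rule summable_on_SigmaI[where g = "\<lambda>s. lp_sum p (\<lambda>y. a (s, y)) B"])
      (use assms in \<open>auto simp: in_lp_def lp_sum_def\<close>)
  show "lp_sum p a (S \<times> B) = (\<Sum>s\<in>S. lp_sum p (\<lambda>y. a (s, y)) B)"
    using infsum_Sigma_banach[OF *[unfolded in_lp_def]] assms(1)
    unfolding lp_sum_def by simp
qed

lemma ex_term_with_lp_sum_add_le:
  fixes w :: "nat \<Rightarrow> 'a \<Rightarrow> 'k::real_normed_vector"
  assumes p: "0 < p" and T: "in_lp p T A"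
    and w: "\<And>n. in_lp p (w n) A" "\<And>n. lp_sum p (w n) A \<le> C"
    and null: "\<And>x. x \<in> A \<Longrightarrow> (\<lambda>n. w n x) \<longlonglongrightarrow> 0"
  obtains n where "in_lp p (\<lambda>x. T x + w n x) A"
    "lp_sum p (\<lambda>x. T x + w n x) A \<le> lp_sum p T A + (1 + 2 powr p * (1 + C))"
proof -
  obtain F where F: "finite F" "F \<subseteq> A" and tail: "lp_sum p T (A - F) \<le> 1"
    by (rule in_lp_tail_small[OF T zero_less_one])
  have "(\<lambda>n. \<Sum>x\<in>F. norm (T x + w n x) powr p) \<longlonglongrightarrow> (\<Sum>x\<in>F. norm (T x + 0) powr p)"
  proof (rule tendsto_sum)
    fix x assume "x \<in> F"
    with F null have "(\<lambda>n. w n x) \<longlonglongrightarrow> 0" by blast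
    then show "(\<lambda>n. norm (T x + w n x) powr p) \<longlonglongrightarrow> norm (T x + 0) powr p"
      using p by (intro tendsto_intros) auto
  qed
  then have "\<forall>\<^sub>F n in sequentially.
      (\<Sum>x\<in>F. norm (T x + w n x) powr p) < (\<Sum>x\<in>F. norm (T x) powr p) + 1"
    by (intro order_tendstoD) auto
  then obtain n where n: "(\<Sum>x\<in>F. norm (T x + w n x) powr p) < (\<Sum>x\<in>F. norm (T x) powr p) + 1"
    by (meson eventually_sequentially order.refl)
  have Tw: "in_lp p (\<lambda>x. T x + w n x) A"
    by (rule in_lp_add[OF p T w(1)])
  have "A - F \<subseteq> A" by blast
  then have "lp_sum p (\<lambda>x. T x + w n x) (A - F)
      \<le> 2 powr p * (lp_sum p T (A - F) + lp_sum p (w n) (A - F))"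
    by (intro lp_sum_add_le[OF p] in_lp_subset[OF T] in_lp_subset[OF w(1)])
  also have "\<dots> \<le> 2 powr p * (1 + C)"
    using tail lp_sum_mono_set[OF w(1), of "A - F" n] w(2)[of n] by (intro mult_left_mono) auto
  finally have "lp_sum p (\<lambda>x. T x + w n x) (A - F) \<le> 2 powr p * (1 + C)" .
  with n lp_sum_split_finite[OF Tw F] lp_sum_split_finite[OF T F] lp_sum_nonneg[of p T "A - F"]
  have "lp_sum p (\<lambda>x. T x + w n x) A \<le> lp_sum p T A + (1 + 2 powr p * (1 + C))"
    by linarith
  with Tw show thesis by (rule that)
qed

lemma ex_sum_with_linear_lp_sum:
  fixes w :: "nat \<Rightarrow> 'a \<Rightarrow> 'k::real_normed_vector"
  assumes p: "0 < p"
    and w: "\<And>n. in_lp p (w n) A" "\<And>n. lp_sum p (w n) A \<le> C"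
    and null: "\<And>x. x \<in> A \<Longrightarrow> (\<lambda>n. w n x) \<longlonglongrightarrow> 0"
  shows "\<exists>m. in_lp p (\<lambda>x. \<Sum>k<N. w (m k) x) A \<and>
    lp_sum p (\<lambda>x. \<Sum>k<N. w (m k) x) A \<le> real N * (1 + 2 powr p * (1 + C))"
proof (induction N)
  case 0
  then show ?case by (simp add: in_lp_def lp_sum_def)
next
  case (Suc N)
  then obtain m where m: "in_lp p (\<lambda>x. \<Sum>k<N. w (m k) x) A"
    "lp_sum p (\<lambda>x. \<Sum>k<N. w (m k) x) A \<le> real N * (1 + 2 powr p * (1 + C))"
    by blast
  obtain n where n: "in_lp p (\<lambda>x. (\<Sum>k<N. w (m k) x) + w n x) A"
    "lp_sum p (\<lambda>x. (\<Sum>k<N. w (m k) x) + w n x) A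
       \<le> lp_sum p (\<lambda>x. \<Sum>k<N. w (m k) x) A + (1 + 2 powr p * (1 + C))"
    by (rule ex_term_with_lp_sum_add_le[OF p m(1) w null])
  have "(\<Sum>k<Suc N. w ((m(N := n)) k) x) = (\<Sum>k<N. w (m k) x) + w n x" for x
    by simp
  with n m(2) show ?case
    by (intro exI[of _ "m(N := n)"]) (simp add: algebra_simps)
qed

lemma ex_mean_with_small_lp_sum:
  fixes w :: "nat \<Rightarrow> 'a \<Rightarrow> 'k::real_normed_vector"
  assumes p: "1 < p"
    and w: "\<And>n. in_lp p (w n) A" "\<And>n. lp_sum p (w n) A \<le> C"
    and null: "\<And>x. x \<in> A \<Longrightarrow> (\<lambda>n. w n x) \<longlonglongrightarrow> 0"
    and \<delta>: "0 < \<delta>"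
  obtains N m where "0 < N" "lp_sum p (\<lambda>x. (\<Sum>k<N. w (m k) x) /\<^sub>R real N) A < \<delta>"
proof -
  define D where "D = 1 + 2 powr p * (1 + C)"
  have "(\<lambda>N. real N powr (1 - p)) \<longlonglongrightarrow> 0"
    using p by (intro tendsto_neg_powr filterlim_real_sequentially) auto
  then have "(\<lambda>N. D * real N powr (1 - p)) \<longlonglongrightarrow> D * 0"
    by (rule tendsto_mult_left)
  then have "\<forall>\<^sub>F N in sequentially. D * real N powr (1 - p) < \<delta>"
    using \<delta> by (intro order_tendstoD) auto
  moreover have "\<forall>\<^sub>F N in sequentially. 0 < N"
    by (rule eventually_gt_at_top)
  ultimately obtain N where N: "D * real N powr (1 - p) < \<delta>" "0 < N"
    by (metis (mono_tags, lifting) eventually_conj eventually_sequentially order.refl)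
  obtain m where m: "lp_sum p (\<lambda>x. \<Sum>k<N. w (m k) x) A \<le> real N * D"
    using ex_sum_with_linear_lp_sum[OF _ w null, of N] p unfolding D_def by auto
  have "lp_sum p (\<lambda>x. (\<Sum>k<N. w (m k) x) /\<^sub>R real N) A
      = real N powr - p * lp_sum p (\<lambda>x. \<Sum>k<N. w (m k) x) A"
    by (simp add: lp_sum_scaleR powr_minus inverse_powr)
  also have "\<dots> \<le> real N powr - p * (real N * D)"
    using m by (intro mult_left_mono) auto
  also have "\<dots> = D * real N powr (1 - p)"
    using N(2) by (simp add: powr_diff powr_minus divide_inverse)
  finally show thesis
    using N by (intro that[of N m]) auto
qed

lemma conv_finite_support:
  fixes \<xi> f :: "'g::group_add \<Rightarrow> 'k::real_normed_field"
  assumes "finite {\<gamma>. \<xi> \<gamma> \<noteq> 0}"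
  shows "conv \<xi> f \<eta> = (\<Sum>\<gamma>\<in>{\<gamma>. \<xi> \<gamma> \<noteq> 0}. \<xi> \<gamma> * f (- \<gamma> + \<eta>))"
proof -
  have "conv \<xi> f \<eta> = (\<Sum>\<^sub>\<infinity>\<gamma>\<in>{\<gamma>. \<xi> \<gamma> \<noteq> 0}. \<xi> \<gamma> * f (- \<gamma> + \<eta>))"
    unfolding conv_def by (rule infsum_cong_neutral) auto
  with assms show ?thesis by simp
qed

lemma conv_dirac_diff:
  fixes u :: "'g::group_add \<Rightarrow> 'k::real_normed_field"
  shows "conv (\<lambda>x. dirac s x - dirac 0 x) u \<eta> = u (- s + \<eta>) - u \<eta>"
proof (cases "s = 0")
  case True
  then show ?thesis unfolding conv_def by simp
next
  case False
  have "conv (\<lambda>x. dirac s x - dirac 0 x) u \<eta> =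
      (\<Sum>\<^sub>\<infinity>\<gamma>\<in>{s, 0}. (dirac s \<gamma> - dirac 0 \<gamma>) * u (- \<gamma> + \<eta>))"
    unfolding conv_def by (rule infsum_cong_neutral) (auto simp: dirac_def)
  with False show ?thesis by (simp add: dirac_def)
qed

lemma in_lp_translate:
  fixes a :: "'g::group_add \<Rightarrow> 'k::real_normed_vector"
  assumes "in_lp p a UNIV"
  shows "in_lp p (\<lambda>\<eta>. a (x + \<eta>)) UNIV"
proof -
  have "bij_betw (\<lambda>\<eta>. x + \<eta>) UNIV UNIV"
    by (rule bij_betw_byWitness[of _ "\<lambda>\<eta>. - x + \<eta>"]) (auto simp: add.assoc[symmetric])
  from summable_on_reindex_bij_betw[OF this, of "\<lambda>\<eta>. norm (a \<eta>) powr p"] assms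
  show ?thesis
    unfolding in_lp_def by simp
qed

lemma in_lp_diff_generator:
  fixes f :: "'g::group_add \<Rightarrow> 'k::real_normed_vector"
  assumes "in_Dp S p f" "s \<in> S"
  shows "in_lp p (\<lambda>\<eta>. f \<eta> - f (- s + \<eta>)) UNIV"
proof -
  define \<iota> where "\<iota> \<eta> = (\<eta>, - s + \<eta>)" for \<eta> :: 'g
  have "range \<iota> \<subseteq> cayley_edges S"
    using assms(2) unfolding \<iota>_def cayley_edges_def by auto
  with assms(1) have "(\<lambda>e. norm (grad f e) powr p) summable_on range \<iota>"
    unfolding in_Dp_def in_lp_def using summable_on_subset by blast
  moreover have "inj \<iota>"
    unfolding \<iota>_def by (auto intro: injI)
  ultimately have "((\<lambda>e. norm (grad f e) powr p) \<circ> \<iota>) summable_on UNIV"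
    using summable_on_reindex by blast
  then show ?thesis
    unfolding in_lp_def \<iota>_def grad_def o_def by (simp add: norm_minus_commute)
qed

lemma in_lp_diff_translate:
  fixes f :: "'g::group_add \<Rightarrow> 'k::real_normed_vector"
  assumes p: "0 < p" and f: "in_Dp S p f" and \<gamma>: "\<gamma> \<in> generated_by S"
  shows "in_lp p (\<lambda>\<eta>. f \<eta> - f (- \<gamma> + \<eta>)) UNIV"
  using \<gamma>
proof (induction rule: generated_by.induct)
  case gen_zero
  then show ?case by (simp add: in_lp_def)
next
  case (gen_step s x)
  have "in_lp p (\<lambda>\<eta>. (f \<eta> - f (- s + \<eta>)) + (f (- s + \<eta>) - f (- x + (- s + \<eta>)))) UNIV"
    by (rule in_lp_add[OF p in_lp_diff_generator[OF f gen_step(1)] in_lp_translate[OF gen_step(3)]])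
  then show ?case
    by (simp add: minus_add add.assoc[symmetric])
qed

lemma in_lp_diff_conv:
  fixes f :: "'g::group_add \<Rightarrow> 'k::real_normed_field"
  assumes p: "0 < p" and f: "in_Dp S p f" and gen: "generated_by S = UNIV"
    and fin: "finite {\<gamma>. \<xi> \<gamma> \<noteq> 0}" and mass: "(\<Sum>\<gamma>\<in>{\<gamma>. \<xi> \<gamma> \<noteq> 0}. \<xi> \<gamma>) = 1"
  shows "in_lp p (\<lambda>x. f x - conv \<xi> f x) UNIV"
proof -
  have "f x - conv \<xi> f x = (\<Sum>\<gamma>\<in>{\<gamma>. \<xi> \<gamma> \<noteq> 0}. \<xi> \<gamma> * (f x - f (- \<gamma> + x)))" for x
    by (simp add: conv_finite_support[OF fin] mass sum_distrib_right[symmetric]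
        right_diff_distrib sum_subtractf)
  moreover have "in_lp p (\<lambda>x. \<Sum>\<gamma>\<in>{\<gamma>. \<xi> \<gamma> \<noteq> 0}. \<xi> \<gamma> * (f x - f (- \<gamma> + x))) UNIV"
    using gen by (intro in_lp_sum[OF p fin] in_lp_mult_left in_lp_diff_translate[OF p f]) auto
  ultimately show ?thesis by simp
qed

lemma Dp_norm_eq_lp_sum:
  fixes h :: "'g::group_add \<Rightarrow> 'k::real_normed_vector"
  shows "Dp_norm S p (\<lambda>x. h x - h 0) =
    lp_sum p (\<lambda>z. h (- fst z + snd z) - h (snd z)) (S \<times> UNIV) powr (1 / p)"
proof -
  have "bij_betw (\<lambda>z. (snd z, - fst z + snd z)) (S \<times> UNIV) (cayley_edges S)"
    unfolding bij_betw_def cayley_edges_def by (force intro!: inj_onI)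
  then have "(\<Sum>\<^sub>\<infinity>e\<in>cayley_edges S. norm (grad (\<lambda>x. h x - h 0) e) powr p)
      = lp_sum p (\<lambda>z. h (- fst z + snd z) - h (snd z)) (S \<times> UNIV)"
    unfolding lp_sum_def by (subst infsum_reindex_bij_betw[symmetric]) (auto simp: grad_def)
  then show ?thesis
    unfolding Dp_norm_def by simp
qed

lemma ex_mean_with_small_Dp_norm:
  fixes h :: "nat \<Rightarrow> 'g::group_add \<Rightarrow> 'k::real_normed_vector"
  assumes S: "finite S" and p: "1 < p" and \<epsilon>: "0 < \<epsilon>"
    and diff_lp: "\<And>n s. s \<in> S \<Longrightarrow> in_lp p (\<lambda>x. h n (- s + x) - h n x) UNIV"
    and diff_bound: "\<And>n s. s \<in> S \<Longrightarrow> lp_sum p (\<lambda>x. h n (- s + x) - h n x) UNIV \<le> C"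
    and diff_null: "\<And>s x. s \<in> S \<Longrightarrow> (\<lambda>n. h n (- s + x) - h n x) \<longlonglongrightarrow> 0"
  obtains N m where "0 < N"
    "Dp_norm S p (\<lambda>x. (\<Sum>k<N. h (m k) x) /\<^sub>R real N - (\<Sum>k<N. h (m k) 0) /\<^sub>R real N) < \<epsilon>"
proof -
  define w where "w n z = h n (- fst z + snd z) - h n (snd z)" for n z
  have w_lp: "in_lp p (w n) (S \<times> UNIV)" for n
    by (rule lp_sum_Times_finite(1)[OF S]) (simp add: w_def diff_lp)
  have w_bound: "lp_sum p (w n) (S \<times> UNIV) \<le> real (card S) * C" for n
  proof -
    have "lp_sum p (w n) (S \<times> UNIV) = (\<Sum>s\<in>S. lp_sum p (\<lambda>x. h n (- s + x) - h n x) UNIV)"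
      using lp_sum_Times_finite(2)[OF S, of p "w n" UNIV] diff_lp by (simp add: w_def)
    also have "\<dots> \<le> (\<Sum>s\<in>S. C)"
      by (intro sum_mono diff_bound)
    finally show ?thesis by simp
  qed
  have w_null: "(\<lambda>n. w n z) \<longlonglongrightarrow> 0" if "z \<in> S \<times> UNIV" for z
    using diff_null[of "fst z" "snd z"] that unfolding w_def by auto
  have "0 < \<epsilon> powr p"
    using \<epsilon> by simp
  with ex_mean_with_small_lp_sum[OF p w_lp w_bound w_null] obtain N m where N: "0 < N"
    and small: "lp_sum p (\<lambda>z. (\<Sum>k<N. w (m k) z) /\<^sub>R real N) (S \<times> UNIV) < \<epsilon> powr p"
    by blast
  define H where "H x = (\<Sum>k<N. h (m k) x) /\<^sub>R real N" for x
  have "Dp_norm S p (\<lambda>x. H x - H 0)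
      = lp_sum p (\<lambda>z. (\<Sum>k<N. w (m k) z) /\<^sub>R real N) (S \<times> UNIV) powr (1 / p)"
    unfolding Dp_norm_eq_lp_sum unfolding H_def w_def by (simp add: scaleR_diff_right sum_subtractf)
  also have "\<dots> < (\<epsilon> powr p) powr (1 / p)"
    using small p lp_sum_nonneg by (intro powr_less_mono2) auto
  also have "\<dots> = \<epsilon>"
    using p \<epsilon> by (simp add: powr_powr)
  finally show thesis
    using N unfolding H_def by (rule that[rotated])
qed

theorem lemma3p1:
  fixes S :: "'g::group_add set" and p :: real
    and f :: "'g \<Rightarrow> 'k::{real_normed_field, banach}"
    and \<xi> :: "nat \<Rightarrow> 'g \<Rightarrow> 'k"
  assumes "finite_symmetric_generating S"
    and "1 < p"
    and "in_Dp S p f"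
    and "\<And>n. finite {\<gamma>. \<xi> n \<gamma> \<noteq> 0}"
    and "\<And>n. (\<Sum>\<gamma>\<in>{\<gamma>. \<xi> n \<gamma> \<noteq> 0}. \<xi> n \<gamma>) = 1"
    and "\<And>s \<eta>. s \<in> S \<Longrightarrow>
           (\<lambda>n. conv (\<lambda>x. dirac s x - dirac 0 x) (conv (\<xi> n) f) \<eta>) \<longlonglongrightarrow> 0"
    and "\<exists>K>0. \<forall>s\<in>S. \<forall>n.
           in_lp p (conv (\<lambda>x. dirac s x - dirac 0 x) (conv (\<xi> n) f)) UNIV \<and>
           lp_norm p (conv (\<lambda>x. dirac s x - dirac 0 x) (conv (\<xi> n) f)) UNIV < K"
  shows "reduced_lpH1_class_zero S p f"
  unfolding reduced_lpH1_class_zero_def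
proof (intro allI impI)
  fix \<epsilon> :: real
  assume "0 < \<epsilon>"
  have S: "finite S" and gen: "generated_by S = UNIV"
    using assms(1) unfolding finite_symmetric_generating_def by auto
  have p: "0 < p" using assms(2) by simp
  obtain K where K: "\<And>s n. s \<in> S \<Longrightarrow>
      in_lp p (conv (\<lambda>x. dirac s x - dirac 0 x) (conv (\<xi> n) f)) UNIV \<and>
      lp_norm p (conv (\<lambda>x. dirac s x - dirac 0 x) (conv (\<xi> n) f)) UNIV < K"
    using assms(7) by blast
  have diff: "conv (\<lambda>x. dirac s x - dirac 0 x) u = (\<lambda>x. u (- s + x) - u x)"
    for s and u :: "'g \<Rightarrow> 'k"
    by (rule ext) (rule conv_dirac_diff)
  have diff_lp: "in_lp p (\<lambda>x. conv (\<xi> n) f (- s + x) - conv (\<xi> n) f x) UNIV"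
    if "s \<in> S" for s n
    using K[OF that, of n] by (simp add: diff)
  have diff_bound: "lp_sum p (\<lambda>x. conv (\<xi> n) f (- s + x) - conv (\<xi> n) f x) UNIV \<le> K powr p"
    if "s \<in> S" for s n
    using lp_sum_less_powr_of_lp_norm_less[OF p conjunct2[OF K[OF that, of n]]] by (simp add: diff)
  have diff_null: "(\<lambda>n. conv (\<xi> n) f (- s + x) - conv (\<xi> n) f x) \<longlonglongrightarrow> 0"
    if "s \<in> S" for s x
    using assms(6)[OF that, of x] by (simp add: diff)
  obtain N m where N: "0 < N" and small: "Dp_norm S p (\<lambda>x.
      (\<Sum>k<N. conv (\<xi> (m k)) f x) /\<^sub>R real N - (\<Sum>k<N. conv (\<xi> (m k)) f 0) /\<^sub>R real N) < \<epsilon>"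
    by (rule ex_mean_with_small_Dp_norm[where h = "\<lambda>n. conv (\<xi> n) f",
          OF S assms(2) \<open>0 < \<epsilon>\<close> diff_lp diff_bound diff_null])
  define H where "H x = (\<Sum>k<N. conv (\<xi> (m k)) f x) /\<^sub>R real N" for x
  have "f x - H x = (\<Sum>k<N. f x - conv (\<xi> (m k)) f x) /\<^sub>R real N" for x
    using N by (simp add: H_def sum_subtractf scaleR_diff_right scaleR_conv_of_real right_diff_distrib)
  then have "in_lp p (\<lambda>x. f x - H x) UNIV"
    using in_lp_diff_conv[OF p assms(3) gen assms(4,5)] by (simp add: in_lp_scaleR in_lp_sum[OF p])
  with small show "\<exists>g c. in_lp p g UNIV \<and> Dp_norm S p (\<lambda>x. f x - g x - c) < \<epsilon>"
    by (intro exI[of _ "\<lambda>x. f x - H x"] exI[of _ "H 0"]) (simp add: H_def)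
qed

end
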